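(* Let $X$ be a set with $|X|\ge3$. Then every grading of the symmetric inverse monoid $\mathcal I(X)$ by any group is trivial.
   Context: $\mathcal I(X)$ consists of all bijections $\phi:A\to B$ with $A,B\subseteq X$, composed as partial maps (the composite $\phi\psi$ is restricted to $\psi^{-1}(\mathrm{Im}\,\psi\cap\mathrm{Dom}\,\phi)$), with the empty map as zero. A $\Gamma$-grading of a semigroup $S$ with zero is a map $\deg:S\setminus\{0\}\to\Gamma$ with $\deg(st)=\deg(s)\deg(t)$ whenever $st\neq0$; it is trivial if every nonzero element has degree equal to the identity $\varepsilon$ of $\Gamma$. *)

theory Defs
  imports "HOL-Algebra.Group"
begin

(* The product phi psi (apply psi first) is map composition
  phi o_m psi; the zero is the empty map *)
definition sym_inv_monoid :: "'a set \<Rightarrow> ('a \<rightharpoonup> 'a) set" where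
  "sym_inv_monoid X = {f. dom f \<subseteq> X \<and> ran f \<subseteq> X \<and> inj_on f (dom f)}"

definition sym_inv_grading :: "'a set \<Rightarrow> ('b, 'c) monoid_scheme \<Rightarrow> (('a \<rightharpoonup> 'a) \<Rightarrow> 'b) \<Rightarrow> bool" where
  "sym_inv_grading X G deg \<longleftrightarrow>
     (\<forall>s \<in> sym_inv_monoid X - {Map.empty}. deg s \<in> carrier G) \<and>
     (\<forall>s \<in> sym_inv_monoid X - {Map.empty}. \<forall>t \<in> sym_inv_monoid X - {Map.empty}.
        s \<circ>\<^sub>m t \<noteq> Map.empty \<longrightarrow> deg (s \<circ>\<^sub>m t) = deg s \<otimes>\<^bsub>G\<^esub> deg t)"

end

theory Submission
  imports Defs
begin

text \<open>
  Right multiplication by the idempotent [x \<mapsto> x] collapses every partial bijection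
  sending x to y onto the rank-one map [x \<mapsto> y]; since the degree of an idempotent is
  the identity, all such maps share the degree of [x \<mapsto> y]. For x \<noteq> y, a third
  point c gives the partial bijection [x \<mapsto> y, c \<mapsto> c], which fixes c and so has
  the degree of [c \<mapsto> c], namely the identity. Hence every rank-one map, and with it
  every nonzero element, has trivial degree.
\<close>

lemma singleton_in_sym_inv_monoid:
  assumes "x \<in> X" and "y \<in> X"
  shows "[x \<mapsto> y] \<in> sym_inv_monoid X - {Map.empty}"
  using assms by (auto simp: sym_inv_monoid_def ran_def)

lemma sym_inv_monoid_nonzero_obtain:
  assumes "s \<in> sym_inv_monoid X - {Map.empty}"
  obtains x y where "x \<in> X" and "y \<in> X" and "s x = Some y"
proof -
  obtain x y where "s x = Some y"
    using assms by (auto simp: fun_eq_iff)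
  moreover have "x \<in> dom s" and "y \<in> ran s"
    using \<open>s x = Some y\<close> by (auto simp: ran_def)
  ultimately show ?thesis
    using assms that by (auto simp: sym_inv_monoid_def)
qed

lemma map_comp_singleton_idem:
  assumes "s x = Some y"
  shows "s \<circ>\<^sub>m [x \<mapsto> x] = [x \<mapsto> y]"
  using assms by (auto simp: map_comp_def)

locale sym_inv_graded =
  fixes X :: "'a set" and G :: "('b, 'c) monoid_scheme" and deg :: "('a \<rightharpoonup> 'a) \<Rightarrow> 'b"
  assumes group: "group G"
    and grading: "sym_inv_grading X G deg"
begin

interpretation G: group G
  by (fact group)

lemma deg_closed:
  "s \<in> sym_inv_monoid X - {Map.empty} \<Longrightarrow> deg s \<in> carrier G"
  using grading by (simp add: sym_inv_grading_def)

lemma deg_map_comp: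
  "\<lbrakk>s \<in> sym_inv_monoid X - {Map.empty}; t \<in> sym_inv_monoid X - {Map.empty}; s \<circ>\<^sub>m t \<noteq> Map.empty\<rbrakk>
    \<Longrightarrow> deg (s \<circ>\<^sub>m t) = deg s \<otimes>\<^bsub>G\<^esub> deg t"
  using grading by (simp add: sym_inv_grading_def)

lemma deg_eq_mult_idem:
  assumes s: "s \<in> sym_inv_monoid X - {Map.empty}" and "s x = Some y" and "x \<in> X"
  shows "deg [x \<mapsto> y] = deg s \<otimes>\<^bsub>G\<^esub> deg [x \<mapsto> x]"
  using deg_map_comp[OF s singleton_in_sym_inv_monoid[OF \<open>x \<in> X\<close> \<open>x \<in> X\<close>]]
    map_comp_singleton_idem[of s x y, OF \<open>s x = Some y\<close>]
  by simp

lemma deg_idem_singleton: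
  assumes "x \<in> X"
  shows "deg [x \<mapsto> x] = \<one>\<^bsub>G\<^esub>"
proof -
  have e: "[x \<mapsto> x] \<in> sym_inv_monoid X - {Map.empty}"
    using singleton_in_sym_inv_monoid[OF assms assms] .
  have "deg [x \<mapsto> x] \<otimes>\<^bsub>G\<^esub> deg [x \<mapsto> x] = deg [x \<mapsto> x]"
    using deg_eq_mult_idem[OF e _ assms] by simp
  then show ?thesis
    using G.r_cancel_one[OF deg_closed[OF e] deg_closed[OF e]] by simp
qed

lemma deg_eq_deg_singleton:
  assumes s: "s \<in> sym_inv_monoid X - {Map.empty}" and "s x = Some y" and "x \<in> X"
  shows "deg s = deg [x \<mapsto> y]"
  using deg_eq_mult_idem[OF assms] deg_idem_singleton[OF \<open>x \<in> X\<close>] deg_closed[OF s]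
  by simp

lemma deg_singleton:
  assumes "x \<in> X" and "y \<in> X" and "c \<in> X" and "c \<noteq> x" and "c \<noteq> y"
  shows "deg [x \<mapsto> y] = \<one>\<^bsub>G\<^esub>"
proof (cases "x = y")
  case True
  then show ?thesis
    using deg_idem_singleton[OF \<open>x \<in> X\<close>] by simp
next
  case False
  define \<tau> where "\<tau> = [x \<mapsto> y, c \<mapsto> c]"
  have \<tau>: "\<tau> \<in> sym_inv_monoid X - {Map.empty}"
    using assms False unfolding \<tau>_def sym_inv_monoid_def
    by (auto simp: ran_def inj_on_def split: if_splits)
  have "deg [x \<mapsto> y] = deg \<tau>"
    using deg_eq_deg_singleton[OF \<tau> _ \<open>x \<in> X\<close>, of y] assms by (simp add: \<tau>_def)
  also have "\<dots> = deg [c \<mapsto> c]"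
    using deg_eq_deg_singleton[OF \<tau> _ \<open>c \<in> X\<close>, of c] by (simp add: \<tau>_def)
  also have "\<dots> = \<one>\<^bsub>G\<^esub>"
    using deg_idem_singleton[OF \<open>c \<in> X\<close>] .
  finally show ?thesis .
qed

end

theorem proposition5p1:
  fixes X :: "'a set" and G :: "('b, 'c) monoid_scheme" and deg :: "('a \<rightharpoonup> 'a) \<Rightarrow> 'b"
  assumes "\<exists>a b c. a \<in> X \<and> b \<in> X \<and> c \<in> X \<and> a \<noteq> b \<and> a \<noteq> c \<and> b \<noteq> c"
    and "group G"
    and "sym_inv_grading X G deg"
  shows "\<forall>s \<in> sym_inv_monoid X - {Map.empty}. deg s = \<one>\<^bsub>G\<^esub>"
proof
  interpret sym_inv_graded X G deg
    using assms(2,3) by (rule sym_inv_graded.intro)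
  fix s
  assume s: "s \<in> sym_inv_monoid X - {Map.empty}"
  then obtain x y where "x \<in> X" "y \<in> X" "s x = Some y"
    by (rule sym_inv_monoid_nonzero_obtain)
  moreover obtain c where "c \<in> X" "c \<noteq> x" "c \<noteq> y"
    using assms(1) by blast
  ultimately show "deg s = \<one>\<^bsub>G\<^esub>"
    using deg_eq_deg_singleton[OF s] deg_singleton by simp
qed

end
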